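(* Let $\mathbb K$ be algebraically closed of characteristic zero, $T$ a torus with Lie algebra $\mathfrak t$, $V$ a finite-dimensional $T$-module, and $\mu:V\oplus V^*\to\mathfrak t^*$, $\mu(x,y)(\xi)=y(\xi\cdot x)$. If $(x,y)\in\mu^{-1}(0)$ is such that $T\cdot x$ is closed in $V$ and $T\cdot y$ is closed in $V^*$, then $T\cdot(x,y)$ is closed in $V\oplus V^*$. *)

theory Defs
  imports "HOL-Computational_Algebra.Polynomial"
begin

text \<open>A torus of rank r is (K^*)^r, elements are t :: nat => 'k
  with t j nonzero for j < r (normalized to 1 for j >= r). A finite-dimensional T-module V
  of dimension n is K^n with a weight basis e_0..e_{n-1}; w i :: nat => int is the weight
  (character) of e_i.\<close>

definition torus :: "nat \<Rightarrow> (nat \<Rightarrow> 'k::field) set" where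
  "torus r = {t. (\<forall>j<r. t j \<noteq> 0) \<and> (\<forall>j. r \<le> j \<longrightarrow> t j = 1)}"

definition vecs :: "nat \<Rightarrow> (nat \<Rightarrow> 'k::zero) set" where
  "vecs n = {x. \<forall>i. n \<le> i \<longrightarrow> x i = 0}"

definition char_val :: "nat \<Rightarrow> (nat \<Rightarrow> int) \<Rightarrow> (nat \<Rightarrow> 'k::field) \<Rightarrow> 'k" where
  "char_val r a t = (\<Prod>j<r. t j powi a j)"

definition act_V :: "nat \<Rightarrow> (nat \<Rightarrow> nat \<Rightarrow> int) \<Rightarrow> (nat \<Rightarrow> 'k::field) \<Rightarrow> (nat \<Rightarrow> 'k) \<Rightarrow> (nat \<Rightarrow> 'k)" where
  "act_V r w t x = (\<lambda>i. char_val r (w i) t * x i)"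

text \<open>Contragredient action of T on V^*, in the dual basis: (t.f)(v) = f(t^{-1}.v).\<close>
definition act_Vd :: "nat \<Rightarrow> (nat \<Rightarrow> nat \<Rightarrow> int) \<Rightarrow> (nat \<Rightarrow> 'k::field) \<Rightarrow> (nat \<Rightarrow> 'k) \<Rightarrow> (nat \<Rightarrow> 'k)" where
  "act_Vd r w t y = (\<lambda>i. char_val r (\<lambda>j. - w i j) t * y i)"

definition lie_act :: "nat \<Rightarrow> (nat \<Rightarrow> nat \<Rightarrow> int) \<Rightarrow> (nat \<Rightarrow> 'k::field) \<Rightarrow> (nat \<Rightarrow> 'k) \<Rightarrow> (nat \<Rightarrow> 'k)" where
  "lie_act r w \<xi> x = (\<lambda>i. (\<Sum>j<r. of_int (w i j) * \<xi> j) * x i)"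

definition pairing :: "nat \<Rightarrow> (nat \<Rightarrow> 'k::field) \<Rightarrow> (nat \<Rightarrow> 'k) \<Rightarrow> 'k" where
  "pairing n y v = (\<Sum>i<n. y i * v i)"

definition moment :: "nat \<Rightarrow> nat \<Rightarrow> (nat \<Rightarrow> nat \<Rightarrow> int) \<Rightarrow> (nat \<Rightarrow> 'k::field) \<Rightarrow> (nat \<Rightarrow> 'k) \<Rightarrow> (nat \<Rightarrow> 'k) \<Rightarrow> 'k" where
  "moment r n w x y \<xi> = pairing n y (lie_act r w \<xi> x)"

definition pairvec :: "(nat \<Rightarrow> 'k) \<Rightarrow> (nat \<Rightarrow> 'k) \<Rightarrow> (nat + nat \<Rightarrow> 'k)" where
  "pairvec x y = case_sum x y"

inductive_set polyfun :: "'v set \<Rightarrow> (('v \<Rightarrow> 'k::comm_ring_1) \<Rightarrow> 'k) set" for I :: "'v set" where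
  pf_const: "(\<lambda>_. c) \<in> polyfun I"
| pf_var: "v \<in> I \<Longrightarrow> (\<lambda>x. x v) \<in> polyfun I"
| pf_add: "f \<in> polyfun I \<Longrightarrow> g \<in> polyfun I \<Longrightarrow> (\<lambda>x. f x + g x) \<in> polyfun I"
| pf_mult: "f \<in> polyfun I \<Longrightarrow> g \<in> polyfun I \<Longrightarrow> (\<lambda>x. f x * g x) \<in> polyfun I"

definition aff_space :: "'v set \<Rightarrow> ('v \<Rightarrow> 'k::zero) set" where
  "aff_space I = {x. \<forall>v. v \<notin> I \<longrightarrow> x v = 0}"

definition zariski_closed :: "'v set \<Rightarrow> ('v \<Rightarrow> 'k::comm_ring_1) set \<Rightarrow> bool" where
  "zariski_closed I S \<longleftrightarrow> S \<subseteq> aff_space I \<and>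
     (\<exists>F \<subseteq> polyfun I. S = {x \<in> aff_space I. \<forall>f\<in>F. f x = 0})"

definition alg_closed_field :: "'k::field itself \<Rightarrow> bool" where
  "alg_closed_field _ \<longleftrightarrow> (\<forall>p::'k poly. 0 < degree p \<longrightarrow> (\<exists>z. poly p z = 0))"

end

theory Submission
  imports Defs
begin

(* Let a torus act diagonally with integer weights W v.  A point p with the same support S as z
   lies in the orbit of z iff the ratios p v / z v satisfy prod (p v / z v) powi c v = 1 for every
   integer relation sum c v * W v = 0 among the weights of S: such ratios define a homomorphism
   from the lattice spanned by these weights to K^*, which extends to Z^r because K^* is divisible,
   and the extension is the required torus element.  Clearing denominators makes these conditions
   polynomial.  For the orbit of (x, y) the support condition is itself closed: a point whose two
   components lie in the closed orbits T.x and T.y has the support of (x, y). *)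

lemma alg_closed_nth_root:
  assumes "alg_closed_field TYPE('k::field)" and "0 < g"
  shows "\<exists>s::'k. s ^ g = b"
proof -
  let ?p = "monom (1::'k) g - [:b:]"
  have "coeff ?p g = 1" using assms(2) by (cases g) (auto simp: coeff_monom)
  hence "0 < degree ?p" using assms(2) by (metis le_degree one_neq_zero order.strict_trans2)
  then obtain s where "poly ?p s = 0" using assms(1) unfolding alg_closed_field_def by blast
  thus ?thesis by (auto simp: poly_monom)
qed

lemma int_set_eq_multiples:
  fixes K :: "int set"
  assumes zero: "0 \<in> K" and comb: "\<And>a b q. a \<in> K \<Longrightarrow> b \<in> K \<Longrightarrow> a - q * b \<in> K"
  obtains g :: nat where "K = {k. int g dvd k}"
proof (cases "K \<subseteq> {0}")
  case True
  with zero have "K = {k. int 0 dvd k}" by auto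
  thus ?thesis by (rule that)
next
  case False
  then obtain k where k: "k \<in> K" "k \<noteq> 0" by blast
  have "- k \<in> K" using comb[OF zero k(1), of 1] by simp
  with k have ex: "\<exists>m::nat. 0 < m \<and> int m \<in> K"
    by (cases "k > 0") (auto intro!: exI[of _ "nat \<bar>k\<bar>"])
  define g where "g = (LEAST m::nat. 0 < m \<and> int m \<in> K)"
  have g: "0 < g" "int g \<in> K" using LeastI_ex[OF ex] unfolding g_def by auto
  have "K = {k. int g dvd k}"
  proof (intro set_eqI iffI; simp)
    fix k assume "k \<in> K"
    hence rem: "k mod int g \<in> K" using comb[OF _ g(2), of k "k div int g"]
      by (simp add: minus_div_mult_eq_mod)
    have "nat (k mod int g) < g" using g(1) by (simp add: nat_less_iff)
    hence "\<not> (0 < nat (k mod int g) \<and> int (nat (k mod int g)) \<in> K)"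
      unfolding g_def by (rule not_less_Least)
    moreover have "0 \<le> k mod int g" using g(1) by simp
    ultimately have "k mod int g = 0" using rem by auto
    thus "int g dvd k" by (simp add: dvd_eq_mod_eq_0)
  next
    fix k assume "int g dvd k"
    then obtain q where "k = int g * q" by blast
    thus "k \<in> K" using comb[OF zero g(2), of "- q"] by (simp add: mult.commute)
  qed
  thus ?thesis by (rule that)
qed

definition weight_relation :: "nat \<Rightarrow> ('v \<Rightarrow> nat \<Rightarrow> int) \<Rightarrow> 'v set \<Rightarrow> ('v \<Rightarrow> int) \<Rightarrow> bool" where
  "weight_relation r W S c \<longleftrightarrow> (\<forall>j<r. (\<Sum>v\<in>S. c v * W v j) = 0)"

text \<open>u respects every integer relation among the weights W v, v \<in> S; equivalently
  W v \<mapsto> u v extends to a homomorphism from the lattice they span to the units of the field.\<close>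
definition relation_compatible ::
    "nat \<Rightarrow> ('v \<Rightarrow> nat \<Rightarrow> int) \<Rightarrow> 'v set \<Rightarrow> ('v \<Rightarrow> 'k::field) \<Rightarrow> bool" where
  "relation_compatible r W S u \<longleftrightarrow>
     (\<forall>c. weight_relation r W S c \<longrightarrow> (\<Prod>v\<in>S. u v powi c v) = 1)"

lemma weight_multiples_in_span:
  fixes W :: "'v \<Rightarrow> nat \<Rightarrow> int"
  obtains g :: nat and d where "\<forall>j<r. int g * W a j = (\<Sum>v\<in>A. d v * W v j)"
    and "\<And>k c. \<forall>j<r. k * W a j = (\<Sum>v\<in>A. c v * W v j) \<Longrightarrow> int g dvd k"
proof -
  define K where "K = {k. \<exists>c. \<forall>j<r. k * W a j = (\<Sum>v\<in>A. c v * W v j)}"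
  have "0 \<in> K" unfolding K_def by (auto intro!: exI[of _ "\<lambda>_. 0"])
  moreover have "k1 - q * k2 \<in> K" if "k1 \<in> K" "k2 \<in> K" for k1 k2 q
  proof -
    from that obtain c1 c2 where c1: "\<forall>j<r. k1 * W a j = (\<Sum>v\<in>A. c1 v * W v j)"
      and c2: "\<forall>j<r. k2 * W a j = (\<Sum>v\<in>A. c2 v * W v j)" unfolding K_def by blast
    have "(k1 - q * k2) * W a j = (\<Sum>v\<in>A. (c1 v - q * c2 v) * W v j)" if "j < r" for j
    proof -
      have "(\<Sum>v\<in>A. (c1 v - q * c2 v) * W v j)
          = (\<Sum>v\<in>A. c1 v * W v j) - q * (\<Sum>v\<in>A. c2 v * W v j)"
        by (simp add: left_diff_distrib sum_subtractf sum_distrib_left mult.assoc)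
      also have "\<dots> = k1 * W a j - q * (k2 * W a j)" using c1 c2 that by simp
      finally show ?thesis by (simp add: left_diff_distrib)
    qed
    thus ?thesis unfolding K_def by (auto intro!: exI[of _ "\<lambda>v. c1 v - q * c2 v"])
  qed
  ultimately obtain g where K: "K = {k. int g dvd k}" by (rule int_set_eq_multiples)
  have "int g \<in> K" using K by simp
  then obtain d where "\<forall>j<r. int g * W a j = (\<Sum>v\<in>A. d v * W v j)"
    unfolding K_def by auto
  moreover have "int g dvd k" if "\<forall>j<r. k * W a j = (\<Sum>v\<in>A. c v * W v j)" for k c
  proof -
    have "k \<in> K" unfolding K_def using that by auto
    thus ?thesis using K by simp
  qed
  ultimately show ?thesis by (rule that)
qed

lemma weight_relation_insert:
  assumes "finite A" and "a \<notin> A"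
  shows "weight_relation r W (insert a A) c \<longleftrightarrow>
    (\<forall>j<r. (\<Sum>v\<in>A. c v * W v j) = - c a * W a j)"
  using assms unfolding weight_relation_def by (simp add: add_eq_0_iff)

lemma relation_compatible_insert:
  fixes u :: "'v \<Rightarrow> 'k::field"
  assumes alg: "alg_closed_field TYPE('k)" and fin: "finite A" and a: "a \<notin> A"
    and nz: "\<forall>v\<in>A. u v \<noteq> 0" and comp: "relation_compatible r W A u"
  obtains s where "s \<noteq> 0" and "relation_compatible r W (insert a A) (u(a := s))"
proof -
  obtain g :: nat and d where d: "\<forall>j<r. int g * W a j = (\<Sum>v\<in>A. d v * W v j)"
    and g_dvd: "\<And>k c. \<forall>j<r. k * W a j = (\<Sum>v\<in>A. c v * W v j) \<Longrightarrow> int g dvd k"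
    using weight_multiples_in_span[where r=r and W=W and a=a and A=A] by blast
  define b where "b = (\<Prod>v\<in>A. u v powi d v)"
  have "b \<noteq> 0" unfolding b_def using nz fin by (simp add: power_int_not_zero)
  moreover have "b = 1" if "g = 0"
    using comp d that unfolding b_def relation_compatible_def weight_relation_def by simp
  ultimately have "\<exists>s. s \<noteq> 0 \<and> s ^ g = b"
    using alg_closed_nth_root[OF alg, of g b] by (cases "g = 0") (auto intro: exI[of _ 1])
  then obtain s where s: "s \<noteq> 0" "s ^ g = b" by blast
  have "(\<Prod>v\<in>insert a A. (u(a := s)) v powi c v) = 1" if rel: "weight_relation r W (insert a A) c" for c
  proof -
    have rel': "\<forall>j<r. (\<Sum>v\<in>A. c v * W v j) = - c a * W a j"
      using rel weight_relation_insert[OF fin a] by blast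
    then obtain m where m: "c a = int g * m" using g_dvd[of "- c a" c] by fastforce
    \<comment> \<open>shifting c by a multiple of d cancels the coefficient of a\<close>
    have "weight_relation r W A (\<lambda>v. c v + m * d v)"
      unfolding weight_relation_def
    proof (intro allI impI)
      fix j assume "j < r"
      hence "(\<Sum>v\<in>A. (c v + m * d v) * W v j) = - c a * W a j + m * (int g * W a j)"
        using rel' d by (simp add: algebra_simps sum.distrib sum_distrib_left)
      thus "(\<Sum>v\<in>A. (c v + m * d v) * W v j) = 0" by (simp add: m algebra_simps)
    qed
    hence "1 = (\<Prod>v\<in>A. u v powi c v * (u v powi d v) powi m)"
      using comp nz unfolding relation_compatible_def
      by (auto simp: power_int_add power_int_mult[symmetric] mult.commute[of m] intro!: prod.cong)
    also have "\<dots> = (\<Prod>v\<in>A. u v powi c v) * b powi m"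
      unfolding b_def prod.distrib using fin
      by (induction A rule: finite_induct) (auto simp: power_int_mult_distrib)
    also have "b powi m = s powi c a" by (simp add: m power_int_mult s)
    also have "(\<Prod>v\<in>A. u v powi c v) = (\<Prod>v\<in>A. (u(a := s)) v powi c v)"
      using a by (intro prod.cong) auto
    finally show ?thesis using fin a by (simp add: mult.commute)
  qed
  thus ?thesis using s(1) that unfolding relation_compatible_def by blast
qed

lemma relation_compatible_extend:
  fixes u :: "'v \<Rightarrow> 'k::field"
  assumes alg: "alg_closed_field TYPE('k)" and "finite D" and fin: "finite A" and "A \<inter> D = {}"
    and nz: "\<forall>v\<in>A. u v \<noteq> 0" and comp: "relation_compatible r W A u"
  shows "\<exists>u'. (\<forall>v\<in>A. u' v = u v) \<and> (\<forall>v\<in>A \<union> D. u' v \<noteq> 0) \<and> relation_compatible r W (A \<union> D) u'"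
  using assms(2,4)
proof (induction D rule: finite_induct)
  case empty
  show ?case using nz comp by (intro exI[of _ u]) simp
next
  case (insert a D)
  hence AD: "A \<inter> D = {}" and a: "a \<notin> A \<union> D" by auto
  obtain u' where u': "\<forall>v\<in>A. u' v = u v" "\<forall>v\<in>A \<union> D. u' v \<noteq> 0"
    "relation_compatible r W (A \<union> D) u'" using insert.IH[OF AD] by (elim exE conjE)
  obtain s where s: "s \<noteq> 0" "relation_compatible r W (insert a (A \<union> D)) (u'(a := s))"
    by (rule relation_compatible_insert[OF alg finite_UnI[OF fin insert.hyps(1)] a u'(2,3)])
  show ?case
  proof (intro exI conjI)
    show "relation_compatible r W (A \<union> insert a D) (u'(a := s))" using s(2) by simp
    show "\<forall>v\<in>A. (u'(a := s)) v = u v" using u'(1) a by auto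
    show "\<forall>v\<in>A \<union> insert a D. (u'(a := s)) v \<noteq> 0" using u'(2) s(1) by auto
  qed
qed

lemma exists_torus_point:
  fixes u :: "'v \<Rightarrow> 'k::field"
  assumes alg: "alg_closed_field TYPE('k)" and fin: "finite S"
    and nz: "\<forall>v\<in>S. u v \<noteq> 0" and comp: "relation_compatible r W S u"
  obtains t where "t \<in> torus r" and "\<forall>v\<in>S. char_val r (W v) t = u v"
proof -
  \<comment> \<open>adjoin the coordinate characters; their prescribed values are the coordinates of t\<close>
  define W' :: "'v + nat \<Rightarrow> nat \<Rightarrow> int" where "W' = case_sum W (\<lambda>j i. of_bool (i = j))"
  have comp': "relation_compatible r W' (Inl ` S) (case_sum u (\<lambda>_. 1))"
    using comp unfolding relation_compatible_def weight_relation_def W'_def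
    by (simp add: sum.reindex prod.reindex o_def)
  have disj: "Inl ` S \<inter> Inr ` {..<r} = {}" by blast
  have nz': "\<forall>v\<in>Inl ` S. case_sum u (\<lambda>_. 1) v \<noteq> 0" using nz by auto
  obtain u' where "\<forall>v\<in>Inl ` S. u' v = case_sum u (\<lambda>_. 1) v"
    "\<forall>v\<in>Inl ` S \<union> Inr ` {..<r}. u' v \<noteq> 0" "relation_compatible r W' (Inl ` S \<union> Inr ` {..<r}) u'"
    using relation_compatible_extend[OF alg finite_imageI[OF finite_lessThan] finite_imageI[OF fin]
        disj nz' comp'] by (elim exE conjE)
  hence u': "\<forall>v\<in>S. u' (Inl v) = u v" "\<forall>j<r. u' (Inr j) \<noteq> 0"
    "relation_compatible r W' (S <+> {..<r}) u'" by (auto simp: Plus_def)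
  define t where "t j = (if j < r then u' (Inr j) else 1)" for j
  have "char_val r (W v) t = u v" if v: "v \<in> S" for v
  proof -
    define c where "c = case_sum (\<lambda>v'. of_bool (v' = v)) (\<lambda>j. - W v j)"
    have "weight_relation r W' (S <+> {..<r}) c"
      using fin v unfolding weight_relation_def sum.Plus[OF fin finite_lessThan]
      by (simp add: c_def W'_def sum_negf)
    hence "(\<Prod>q\<in>S <+> {..<r}. u' q powi c q) = 1"
      using u'(3) unfolding relation_compatible_def by blast
    hence "1 = (\<Prod>v'\<in>S. u' (Inl v') powi of_bool (v' = v)) * (\<Prod>j<r. u' (Inr j) powi - W v j)"
      by (simp add: prod.Plus[OF fin finite_lessThan] c_def)
    also have "(\<Prod>v'\<in>S. u' (Inl v') powi of_bool (v' = v)) = u v"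
      using fin v u'(1)
      by (simp add: of_bool_def if_distrib[of "\<lambda>x. _ powi x"] prod.delta power_int_1_right cong: if_cong)
    also have "(\<Prod>j<r. u' (Inr j) powi - W v j) = (\<Prod>j<r. inverse (t j powi W v j))"
      by (simp add: t_def power_int_minus)
    also have "\<dots> = inverse (char_val r (W v) t)"
      unfolding char_val_def by (rule prod_inversef[unfolded comp_def])
    finally show ?thesis
      by (metis inverse_unique inverse_inverse_eq)
  qed
  moreover have "t \<in> torus r" using u'(2) unfolding torus_def t_def by auto
  ultimately show ?thesis using that by blast
qed

lemma char_val_nonzero: "t \<in> torus r \<Longrightarrow> char_val r a t \<noteq> (0::'k::field)"
  unfolding char_val_def torus_def by (auto simp: power_int_not_zero)

lemma char_val_add:
  "t \<in> torus r \<Longrightarrow> char_val r (\<lambda>j. a j + b j) t = char_val r a t * char_val r b (t::nat \<Rightarrow> 'k::field)"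
  unfolding char_val_def torus_def by (auto simp: prod.distrib[symmetric] power_int_add intro!: prod.cong)

lemma char_val_powi:
  "t \<in> torus r \<Longrightarrow> char_val r a t powi k = char_val r (\<lambda>j. k * a j) (t::nat \<Rightarrow> 'k::field)"
proof -
  have "(\<Prod>j<r. t j powi a j) powi k = (\<Prod>j<r. (t j powi a j) powi k)"
    by (induction r) (auto simp: power_int_mult_distrib)
  also have "\<dots> = (\<Prod>j<r. t j powi (k * a j))"
    by (simp add: power_int_mult[symmetric] mult.commute[of k])
  finally show ?thesis unfolding char_val_def .
qed

lemma prod_char_val_powi:
  fixes t :: "nat \<Rightarrow> 'k::field"
  assumes "t \<in> torus r" and "finite S"
  shows "(\<Prod>v\<in>S. char_val r (W v) t powi c v) = char_val r (\<lambda>j. \<Sum>v\<in>S. c v * W v j) t"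
  using assms(2)
proof (induction S rule: finite_induct)
  case empty
  show ?case by (simp add: char_val_def)
next
  case (insert v S)
  thus ?case using assms(1) by (simp add: char_val_add char_val_powi)
qed

definition weight_orbit :: "nat \<Rightarrow> ('v \<Rightarrow> nat \<Rightarrow> int) \<Rightarrow> ('v \<Rightarrow> 'k::field) \<Rightarrow> ('v \<Rightarrow> 'k) set" where
  "weight_orbit r W z = (\<lambda>t v. char_val r (W v) t * z v) ` torus r"

lemma weight_orbit_zero_iff:
  "p \<in> weight_orbit r W z \<Longrightarrow> p v = 0 \<longleftrightarrow> z v = 0"
  unfolding weight_orbit_def using char_val_nonzero by fastforce

lemma weight_orbit_comp:
  "p \<in> weight_orbit r W z \<Longrightarrow> p \<circ> h \<in> weight_orbit r (W \<circ> h) (z \<circ> h)"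
  unfolding weight_orbit_def by (auto simp: comp_def)

text \<open>The relation \<open>\<Prod>v\<in>S. (p v / z v) powi c v = 1\<close> with denominators cleared.\<close>
definition orbit_binomial :: "'v set \<Rightarrow> ('v \<Rightarrow> 'k::comm_ring_1) \<Rightarrow> ('v \<Rightarrow> int) \<Rightarrow> ('v \<Rightarrow> 'k) \<Rightarrow> 'k" where
  "orbit_binomial S z c p =
     (\<Prod>v\<in>S. p v ^ nat (c v) * z v ^ nat (- c v)) - (\<Prod>v\<in>S. p v ^ nat (- c v) * z v ^ nat (c v))"

lemma powi_divide_eq:
  "(p::'k::field) \<noteq> 0 \<Longrightarrow> z \<noteq> 0 \<Longrightarrow>
    (p / z) powi c = (p ^ nat c * z ^ nat (- c)) / (p ^ nat (- c) * z ^ nat c)"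
  by (cases "c \<ge> 0") (auto simp: power_int_def power_inverse power_divide field_simps)

lemma orbit_binomial_eq_0_iff:
  fixes p z :: "'v \<Rightarrow> 'k::field"
  assumes "finite S" and "\<forall>v\<in>S. p v \<noteq> 0 \<and> z v \<noteq> 0"
  shows "orbit_binomial S z c p = 0 \<longleftrightarrow> (\<Prod>v\<in>S. (p v / z v) powi c v) = 1"
proof -
  have "(\<Prod>v\<in>S. (p v / z v) powi c v)
      = (\<Prod>v\<in>S. p v ^ nat (c v) * z v ^ nat (- c v)) / (\<Prod>v\<in>S. p v ^ nat (- c v) * z v ^ nat (c v))"
    using assms(2) by (simp add: powi_divide_eq prod_dividef)
  moreover have "(\<Prod>v\<in>S. p v ^ nat (- c v) * z v ^ nat (c v)) \<noteq> 0"
    using assms by simp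
  ultimately show ?thesis unfolding orbit_binomial_def by simp
qed

lemma weight_orbit_eq:
  fixes z :: "'v \<Rightarrow> 'k::field"
  defines "S \<equiv> {v. z v \<noteq> 0}"
  assumes alg: "alg_closed_field TYPE('k)" and fin: "finite S"
  shows "weight_orbit r W z = {p. (\<forall>v. p v = 0 \<longleftrightarrow> z v = 0) \<and>
           (\<forall>c. weight_relation r W S c \<longrightarrow> orbit_binomial S z c p = 0)}" (is "_ = ?rhs")
proof
  show "weight_orbit r W z \<subseteq> ?rhs"
  proof
    fix p assume p: "p \<in> weight_orbit r W z"
    then obtain t where t: "t \<in> torus r" and p_eq: "p = (\<lambda>v. char_val r (W v) t * z v)"
      unfolding weight_orbit_def by blast
    have "orbit_binomial S z c p = 0" if "weight_relation r W S c" for c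
    proof -
      have "(\<Prod>v\<in>S. (p v / z v) powi c v) = (\<Prod>v\<in>S. char_val r (W v) t powi c v)"
        by (simp add: p_eq S_def)
      also have "\<dots> = char_val r (\<lambda>j. \<Sum>v\<in>S. c v * W v j) t"
        using t fin by (rule prod_char_val_powi)
      also have "\<dots> = 1"
        using that unfolding weight_relation_def char_val_def by simp
      finally show ?thesis
        using fin p_eq t char_val_nonzero by (subst orbit_binomial_eq_0_iff) (auto simp: S_def)
    qed
    thus "p \<in> ?rhs" using weight_orbit_zero_iff[OF p] by blast
  qed
next
  show "?rhs \<subseteq> weight_orbit r W z"
  proof
    fix p assume "p \<in> ?rhs"
    hence supp: "\<forall>v. p v = 0 \<longleftrightarrow> z v = 0"
      and bin: "\<forall>c. weight_relation r W S c \<longrightarrow> orbit_binomial S z c p = 0" by auto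
    have nz: "\<forall>v\<in>S. p v \<noteq> 0 \<and> z v \<noteq> 0" using supp unfolding S_def by blast
    have quot_nz: "\<forall>v\<in>S. p v / z v \<noteq> 0" using nz by simp
    have "relation_compatible r W S (\<lambda>v. p v / z v)"
      using bin fin nz orbit_binomial_eq_0_iff unfolding relation_compatible_def by blast
    then obtain t where "t \<in> torus r" and t: "\<forall>v\<in>S. char_val r (W v) t = p v / z v"
      by (rule exists_torus_point[OF alg fin quot_nz])
    moreover have "p = (\<lambda>v. char_val r (W v) t * z v)"
    proof
      fix v show "p v = char_val r (W v) t * z v"
        using t supp by (cases "v \<in> S") (auto simp: S_def)
    qed
    ultimately show "p \<in> weight_orbit r W z" unfolding weight_orbit_def by blast
  qed
qed

lemma weight_orbit_Plus:
  fixes z :: "'a + 'b \<Rightarrow> 'k::field"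
  defines "S \<equiv> {v. z v \<noteq> 0}"
  assumes alg: "alg_closed_field TYPE('k)" and fin: "finite S"
  shows "weight_orbit r W z = {p. p \<circ> Inl \<in> weight_orbit r (W \<circ> Inl) (z \<circ> Inl) \<and>
           p \<circ> Inr \<in> weight_orbit r (W \<circ> Inr) (z \<circ> Inr) \<and>
           (\<forall>c. weight_relation r W S c \<longrightarrow> orbit_binomial S z c p = 0)}" (is "_ = ?rhs")
proof (intro set_eqI iffI)
  note orbit_eq = weight_orbit_eq[OF alg fin[unfolded S_def], folded S_def]
  fix p
  show "p \<in> ?rhs" if "p \<in> weight_orbit r W z"
    using weight_orbit_comp[OF that, of Inl] weight_orbit_comp[OF that, of Inr] that[unfolded orbit_eq]
    by blast
  show "p \<in> weight_orbit r W z" if p: "p \<in> ?rhs"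
  proof -
    have "p v = 0 \<longleftrightarrow> z v = 0" for v
      using p weight_orbit_zero_iff[of "p \<circ> Inl"] weight_orbit_zero_iff[of "p \<circ> Inr"]
      by (cases v) auto
    thus ?thesis using p orbit_eq by auto
  qed
qed

lemma polyfun_comp:
  assumes "f \<in> polyfun J" and "h ` J \<subseteq> I"
  shows "(\<lambda>p. f (p \<circ> h)) \<in> polyfun I"
  using assms
proof (induction rule: polyfun.induct)
  case (pf_const c)
  show ?case by (rule polyfun.pf_const)
next
  case (pf_var v)
  thus ?case using polyfun.pf_var[of "h v" I] by (simp add: image_subset_iff)
next
  case (pf_add f g)
  thus ?case using polyfun.pf_add by fastforce
next
  case (pf_mult f g)
  thus ?case using polyfun.pf_mult by fastforce
qed

lemma polyfun_minus: "f \<in> polyfun I \<Longrightarrow> g \<in> polyfun I \<Longrightarrow> (\<lambda>x. f x - g x) \<in> polyfun I"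
  using polyfun.pf_add[OF _ polyfun.pf_mult[OF polyfun.pf_const[of "- 1"]]] by simp

lemma polyfun_power: "f \<in> polyfun I \<Longrightarrow> (\<lambda>x. f x ^ k) \<in> polyfun I"
  by (induction k) (simp_all add: polyfun.pf_const[of 1, simplified] polyfun.pf_mult)

lemma polyfun_prod:
  "finite A \<Longrightarrow> (\<And>a. a \<in> A \<Longrightarrow> f a \<in> polyfun I) \<Longrightarrow> (\<lambda>x. \<Prod>a\<in>A. f a x) \<in> polyfun I"
  by (induction A rule: finite_induct) (simp_all add: polyfun.pf_const[of 1, simplified] polyfun.pf_mult)

lemma orbit_binomial_polyfun:
  assumes "finite S" and "S \<subseteq> I"
  shows "orbit_binomial S z c \<in> polyfun I"
proof -
  have "(\<lambda>p. p v ^ k * z v ^ l) \<in> polyfun I" if "v \<in> S" for v k l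
    using that assms(2) by (intro polyfun.pf_mult polyfun_power polyfun.pf_var polyfun.pf_const) auto
  hence "(\<lambda>p. (\<Prod>v\<in>S. p v ^ nat (c v) * z v ^ nat (- c v)) - (\<Prod>v\<in>S. p v ^ nat (- c v) * z v ^ nat (c v)))
      \<in> polyfun I"
    using assms(1) by (intro polyfun_minus polyfun_prod)
  thus ?thesis by (simp add: orbit_binomial_def[abs_def])
qed

lemma zariski_closed_zero_set:
  "F \<subseteq> polyfun I \<Longrightarrow> zariski_closed I {p \<in> aff_space I. \<forall>f\<in>F. f p = 0}"
  unfolding zariski_closed_def by blast

lemma zariski_closed_Int:
  assumes "zariski_closed I A" and "zariski_closed I B"
  shows "zariski_closed I (A \<inter> B)"
proof -
  obtain F G where "F \<subseteq> polyfun I" "A = {p \<in> aff_space I. \<forall>f\<in>F. f p = 0}"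
    and "G \<subseteq> polyfun I" "B = {p \<in> aff_space I. \<forall>f\<in>G. f p = 0}"
    using assms unfolding zariski_closed_def by blast
  hence "A \<inter> B = {p \<in> aff_space I. \<forall>f\<in>F \<union> G. f p = 0}" and "F \<union> G \<subseteq> polyfun I" by auto
  thus ?thesis using zariski_closed_zero_set[of "F \<union> G" I] by simp
qed

lemma zariski_closed_preimage:
  assumes "zariski_closed J C" and "h ` J \<subseteq> I" and "h -` I \<subseteq> J"
  shows "zariski_closed I {p \<in> aff_space I. p \<circ> h \<in> C}"
proof -
  obtain F where F: "F \<subseteq> polyfun J" "C = {q \<in> aff_space J. \<forall>f\<in>F. f q = 0}"
    using assms(1) unfolding zariski_closed_def by blast
  have "p \<circ> h \<in> aff_space J" if "p \<in> aff_space I" for p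
    using that assms(3) unfolding aff_space_def by auto
  hence "{p \<in> aff_space I. p \<circ> h \<in> C} = {p \<in> aff_space I. \<forall>g\<in>(\<lambda>f p. f (p \<circ> h)) ` F. g p = 0}"
    using F(2) by auto
  moreover have "(\<lambda>f p. f (p \<circ> h)) ` F \<subseteq> polyfun I"
    using F(1) assms(2) polyfun_comp by blast
  ultimately show ?thesis using zariski_closed_zero_set[of "(\<lambda>f p. f (p \<circ> h)) ` F" I] by simp
qed

lemma aff_space_Plus:
  "p \<in> aff_space (A <+> B) \<longleftrightarrow> p \<circ> Inl \<in> aff_space A \<and> p \<circ> Inr \<in> aff_space B"
  unfolding aff_space_def by (auto simp: Plus_def) (metis imageI sumE)

lemma zariski_closed_weight_orbit_Plus:
  fixes z :: "'a + 'b \<Rightarrow> 'k::field"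
  assumes alg: "alg_closed_field TYPE('k)" and "finite A" and "finite B"
    and supp: "{v. z v \<noteq> 0} \<subseteq> A <+> B"
    and closed_Inl: "zariski_closed A (weight_orbit r (W \<circ> Inl) (z \<circ> Inl))"
    and closed_Inr: "zariski_closed B (weight_orbit r (W \<circ> Inr) (z \<circ> Inr))"
  shows "zariski_closed (A <+> B) (weight_orbit r W z)"
proof -
  define S where "S = {v. z v \<noteq> 0}"
  have fin: "finite S" using finite_subset[OF supp] assms(2,3) unfolding S_def by simp
  have aff: "p \<in> aff_space (A <+> B)"
    if "p \<circ> Inl \<in> weight_orbit r (W \<circ> Inl) (z \<circ> Inl)"
      and "p \<circ> Inr \<in> weight_orbit r (W \<circ> Inr) (z \<circ> Inr)" for p
    using that closed_Inl closed_Inr unfolding aff_space_Plus zariski_closed_def by blast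
  have "weight_orbit r W z =
      {p \<in> aff_space (A <+> B). p \<circ> Inl \<in> weight_orbit r (W \<circ> Inl) (z \<circ> Inl)} \<inter>
      {p \<in> aff_space (A <+> B). p \<circ> Inr \<in> weight_orbit r (W \<circ> Inr) (z \<circ> Inr)} \<inter>
      {p \<in> aff_space (A <+> B). \<forall>f\<in>orbit_binomial S z ` {c. weight_relation r W S c}. f p = 0}"
    unfolding weight_orbit_Plus[OF alg fin[unfolded S_def], folded S_def] using aff by auto
  also have "zariski_closed (A <+> B) \<dots>"
    using closed_Inl closed_Inr fin supp unfolding S_def
    by (intro zariski_closed_Int zariski_closed_preimage zariski_closed_zero_set)
      (auto simp: orbit_binomial_polyfun)
  finally show ?thesis .
qed

lemma act_V_orbit: "(\<lambda>t. act_V r w t x) ` torus r = weight_orbit r w x"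
  unfolding act_V_def weight_orbit_def ..

lemma act_Vd_orbit: "(\<lambda>t. act_Vd r w t y) ` torus r = weight_orbit r (\<lambda>i j. - w i j) y"
  unfolding act_Vd_def weight_orbit_def ..

lemma pairvec_orbit:
  "(\<lambda>t. pairvec (act_V r w t x) (act_Vd r w t y)) ` torus r
     = weight_orbit r (case_sum w (\<lambda>i j. - w i j)) (pairvec x y)"
  unfolding weight_orbit_def
  by (intro image_cong refl ext) (simp add: pairvec_def act_V_def act_Vd_def split: sum.split)

lemma pairvec_nonzero_subset:
  assumes "x \<in> vecs n" and "y \<in> vecs n"
  shows "{v. pairvec x y v \<noteq> 0} \<subseteq> {..<n} <+> {..<n}"
proof
  fix v assume "v \<in> {v. pairvec x y v \<noteq> 0}"
  thus "v \<in> {..<n} <+> {..<n}"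
    using assms by (cases v; auto simp: pairvec_def vecs_def; meson not_le)
qed

theorem lemma3p9:
  fixes r n :: nat and w :: "nat \<Rightarrow> nat \<Rightarrow> int" and x y :: "nat \<Rightarrow> 'k::field_char_0"
  assumes "alg_closed_field TYPE('k)"
    and "x \<in> vecs n" and "y \<in> vecs n"
    and "\<forall>\<xi>\<in>vecs r. moment r n w x y \<xi> = 0"
    and "zariski_closed {..<n} ((\<lambda>t. act_V r w t x) ` torus r)"
    and "zariski_closed {..<n} ((\<lambda>t. act_Vd r w t y) ` torus r)"
  shows "zariski_closed (Inl ` {..<n} \<union> Inr ` {..<n})
           ((\<lambda>t. pairvec (act_V r w t x) (act_Vd r w t y)) ` torus r)"
proof -
  let ?W = "case_sum w (\<lambda>i j. - w i j)"
  have "?W \<circ> Inl = w" and "?W \<circ> Inr = (\<lambda>i j. - w i j)"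
    and "pairvec x y \<circ> Inl = x" and "pairvec x y \<circ> Inr = y"
    by (simp_all add: pairvec_def case_sum_o_inj)
  hence "zariski_closed ({..<n} <+> {..<n}) (weight_orbit r ?W (pairvec x y))"
    using assms(5,6) unfolding act_V_orbit act_Vd_orbit
    by (intro zariski_closed_weight_orbit_Plus assms(1) pairvec_nonzero_subset assms(2,3)) auto
  thus ?thesis by (simp add: pairvec_orbit Plus_def)
qed

end
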